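(* Let $m$ be a divisor of $n$, $s=n/m$, $\alpha$ a primitive element of $\mathbb{F}_{q^n}$, $l$ an integer with $1\le l<\frac{q^n-1}{q^m-1}$, and $L$ the degree of the minimal polynomial of $\alpha^l$ over $\mathbb{F}_{q^m}$. Let $r\ge2$ and integers $1\le s_1<\dots<s_r\le L$ with $s_r<s$, and let $\mathcal{F}=(\mathcal{F}_1,\dots,\mathcal{F}_r)$ be the flag with $\mathcal{F}_i=\bigoplus_{j=0}^{s_i-1}\mathbb{F}_{q^m}\alpha^{lj}$ (of type $(ms_1,\dots,ms_r)$). Then $\mathrm{Orb}(\mathcal{F})$ has best friend $\mathbb{F}_{q^m}$ and $|\mathrm{Orb}(\mathcal{F})|=\frac{q^n-1}{q^m-1}$. Moreover: (1) If $s_r<L$, then $\mathrm{Orb}(\mathcal{F})$ is consistent and $d_f(\mathrm{Orb}(\mathcal{F}))=2mr$. (2) If $s_r=L$, then $d_f(\mathrm{Orb}(\mathcal{F}))=2m(r-1)$ and, with $c=\frac{q^n-1}{q^{mL}-1}$, $\mathrm{Orb}(\mathcal{F})$ is the disjoint union $\dot\bigcup_{i=0}^{c-1}\mathrm{Orb}_{\alpha^c}(\mathcal{F}\alpha^i)$.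
   Context: $q$ prime power; $\mathbb{F}_{q^n}$ is an $n$-dimensional $\mathbb{F}_q$-vector space; subspaces are $\mathbb{F}_q$-subspaces; $d_S(\mathcal{U},\mathcal{V})=\dim(\mathcal{U}+\mathcal{V})-\dim(\mathcal{U}\cap\mathcal{V})$. A flag is a chain $\{0\}\subsetneq\mathcal{F}_1\subsetneq\cdots\subsetneq\mathcal{F}_r\subsetneq\mathbb{F}_{q^n}$; $d_f(\mathcal{F},\mathcal{F}')=\sum_i d_S(\mathcal{F}_i,\mathcal{F}'_i)$; the minimum distance of a flag code is the minimum $d_f$ between distinct codewords. For $\beta\in\mathbb{F}_{q^n}^\ast$, $\mathcal{F}\beta=(\mathcal{F}_1\beta,\dots,\mathcal{F}_r\beta)$, $\mathrm{Orb}_\beta(\mathcal{F})=\{\mathcal{F}\beta^j:j\ge0\}$, and $\mathrm{Orb}(\mathcal{F})=\mathrm{Orb}_\alpha(\mathcal{F})$ for $\alpha$ primitive. The $i$-th projected code of a flag code $\mathcal{C}$ is $\mathcal{C}_i=\{\mathcal{F}_i:\mathcal{F}\in\mathcal{C}\}$. $\mathcal{C}$ is disjoint if $|\mathcal{C}_i|=|\mathcal{C}|$ for all $i$, and consistent if it is disjoint and $d_f(\mathcal{C})=\sum_i d_S(\mathcal{C}_i)$ (minimum subspace distances of the projected codes). A subfield $\mathbb{F}_{q^m}$ is a friend of a subspace if the subspace is an $\mathbb{F}_{q^m}$-vector space; a friend of a flag is a common friend of all its subspaces; the best friend is the largest friend (of a code $\mathrm{Orb}_\beta(\mathcal{F})$: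 that of $\mathcal{F}$). *)

theory Defs
  imports "HOL-Computational_Algebra.Polynomial" "HOL-Computational_Algebra.Primes"
begin

text \<open>The ambient field F_{q^n} is a finite field type 'a with CARD('a) = q^n.
  The subfield F_{q^d} (d dividing n) is the set of roots of X^(q^d) - X.\<close>

definition subfield :: "nat \<Rightarrow> nat \<Rightarrow> 'a::{finite,field} set" where
  "subfield q d = {x. x ^ (q ^ d) = x}"

definition prime_power :: "nat \<Rightarrow> bool" where
  "prime_power q \<longleftrightarrow> (\<exists>p k. prime p \<and> k > 0 \<and> q = p ^ k)"

definition primitive_elem :: "'a::{finite,field} \<Rightarrow> bool" where
  "primitive_elem a \<longleftrightarrow> (\<forall>x. x \<noteq> 0 \<longrightarrow> (\<exists>j::nat. x = a ^ j))"

definition fq_subspace :: "nat \<Rightarrow> 'a::{finite,field} set \<Rightarrow> bool" where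
  "fq_subspace q U \<longleftrightarrow> 0 \<in> U \<and> (\<forall>u\<in>U. \<forall>v\<in>U. u + v \<in> U)
     \<and> (\<forall>c\<in>subfield q 1. \<forall>u\<in>U. c * u \<in> U)"

definition dimq :: "nat \<Rightarrow> 'a::{finite,field} set \<Rightarrow> nat" where
  "dimq q U = (THE k. card U = q ^ k)"

definition ssum :: "'a::{finite,field} set \<Rightarrow> 'a set \<Rightarrow> 'a set" where
  "ssum U V = {u + v | u v. u \<in> U \<and> v \<in> V}"

definition subspace_dist :: "nat \<Rightarrow> 'a::{finite,field} set \<Rightarrow> 'a set \<Rightarrow> nat" where
  "subspace_dist q U V = dimq q (ssum U V) - dimq q (U \<inter> V)"

definition flag_dist :: "nat \<Rightarrow> 'a::{finite,field} set list \<Rightarrow> 'a set list \<Rightarrow> nat" where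
  "flag_dist q F G = (\<Sum>i<length F. subspace_dist q (F ! i) (G ! i))"

definition flag_min_dist :: "nat \<Rightarrow> 'a::{finite,field} set list set \<Rightarrow> nat" where
  "flag_min_dist q C = Min {flag_dist q F G | F G. F \<in> C \<and> G \<in> C \<and> F \<noteq> G}"

definition subspace_min_dist :: "nat \<Rightarrow> 'a::{finite,field} set set \<Rightarrow> nat" where
  "subspace_min_dist q C = Min {subspace_dist q U V | U V. U \<in> C \<and> V \<in> C \<and> U \<noteq> V}"

definition projected :: "'a set list set \<Rightarrow> nat \<Rightarrow> 'a set set" where
  "projected C i = {F ! i | F. F \<in> C}"

definition disjoint_code :: "nat \<Rightarrow> 'a set list set \<Rightarrow> bool" where
  "disjoint_code r C \<longleftrightarrow> (\<forall>i<r. card (projected C i) = card C)"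

definition consistent_code :: "nat \<Rightarrow> nat \<Rightarrow> 'a::{finite,field} set list set \<Rightarrow> bool" where
  "consistent_code q r C \<longleftrightarrow> disjoint_code r C \<and>
     flag_min_dist q C = (\<Sum>i<r. subspace_min_dist q (projected C i))"

definition flag_mult :: "'a::{finite,field} set list \<Rightarrow> 'a \<Rightarrow> 'a set list" where
  "flag_mult F b = map (\<lambda>U. (\<lambda>x. x * b) ` U) F"

definition orb :: "'a::{finite,field} \<Rightarrow> 'a set list \<Rightarrow> 'a set list set" where
  "orb b F = {flag_mult F (b ^ j) | j. True}"

definition flag_friend :: "nat \<Rightarrow> nat \<Rightarrow> nat \<Rightarrow> 'a::{finite,field} set list \<Rightarrow> bool" where
  "flag_friend q n d F \<longleftrightarrow> d dvd n \<and>
     (\<forall>U\<in>set F. \<forall>c\<in>subfield q d. \<forall>u\<in>U. c * u \<in> U)"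

definition is_best_friend :: "nat \<Rightarrow> nat \<Rightarrow> nat \<Rightarrow> 'a::{finite,field} set list \<Rightarrow> bool" where
  "is_best_friend q n d F \<longleftrightarrow> flag_friend q n d F \<and> (\<forall>d'. flag_friend q n d' F \<longrightarrow> d' \<le> d)"

definition minpoly_degree :: "nat \<Rightarrow> nat \<Rightarrow> 'a::{finite,field} \<Rightarrow> nat" where
  "minpoly_degree q m a = (LEAST d. \<exists>p::'a poly. p \<noteq> 0 \<and> degree p = d \<and>
      (\<forall>i. coeff p i \<in> subfield q m) \<and> poly p a = 0)"

definition fspan :: "nat \<Rightarrow> nat \<Rightarrow> nat \<Rightarrow> (nat \<Rightarrow> 'a::{finite,field}) \<Rightarrow> 'a set" where
  "fspan q m k v = {(\<Sum>j<k. c j * v j) | c. \<forall>j<k. c j \<in> subfield q m}"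

end

theory Submission
  imports Defs "HOL-Number_Theory.Residues" "HOL-Library.FuncSet"
begin

(* Write K = F_{q^m}, b = alpha^l and V_k = K + K b + ... + K b^(k-1), so that F_i = V_(s_i) and
   the orbit consists of the flags F g for nonzero g.  For k <= L the powers 1, b, ..., b^(k-1)
   are K-linearly independent, so V_k has K-dimension k, and V_L = K(b) is a field.  For
   1 <= k < L only the elements of K map V_k into itself (compare the two expansions of g x b in
   the independent powers of b).  Hence K is the best friend, F g = F h iff g / h lies in K, and
   the orbit has (q^n - 1) / (q^m - 1) elements.  Distinct codewords differ in every component of
   dimension below mL, each contributing at least 2m, and the pair F, F b attains this bound:
   b V_(k-1) lies in V_k and b V_k, both of which lie in V_(k+1), while b V_L = V_L.  Finally
   K(b)^* is a subgroup of the cyclic group F_{q^n}^*, so q^(mL) - 1 divides q^n - 1, and the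
   alpha^c-orbits split the orbit according to the exponent of alpha modulo c. *)

lemma prime_power_ge_2: "prime_power q \<Longrightarrow> q \<ge> 2"
proof -
  assume "prime_power q"
  then obtain p k where "prime p" "k > 0" "q = p ^ k" unfolding prime_power_def by blast
  then have "p \<ge> 2" by (simp add: prime_ge_2_nat)
  moreover have "p ^ 1 \<le> p ^ k" using \<open>k > 0\<close> \<open>p \<ge> 2\<close> by (intro power_increasing) auto
  ultimately show ?thesis using \<open>q = p ^ k\<close> by simp
qed

lemma power_minus_one_dvd: "(a::nat) - 1 dvd a ^ k - 1"
proof (cases "a = 0")
  case True
  then show ?thesis by (cases k) auto
next
  case False
  have "int a - 1 dvd int a ^ k - 1"
    using power_diff_1_eq[of "int a" k] by (metis dvd_triv_left)
  moreover have "int (a - 1) = int a - 1" "int (a ^ k - 1) = int a ^ k - 1"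
    using False by (auto simp: of_nat_diff)
  ultimately show ?thesis by (metis of_nat_dvd_iff)
qed

lemma power_div_mod: "(x::'b::monoid_mult) ^ i = (x ^ t) ^ (i div t) * x ^ (i mod t)"
  by (metis div_mult_mod_eq power_add power_mult mult.commute)

lemma power_eq_power_mod: "(x::'b::monoid_mult) ^ t = 1 \<Longrightarrow> x ^ i = x ^ (i mod t)"
  using power_div_mod[of x i t] by simp

lemma power_card_eq_one:
  fixes G :: "'a::field set"
  assumes "finite G" and "0 \<notin> G" and mult_closed: "\<And>x y. x \<in> G \<Longrightarrow> y \<in> G \<Longrightarrow> x * y \<in> G"
    and "x \<in> G"
  shows "x ^ card G = 1"
proof -
  have inj: "inj_on ((*) x) G" using assms by (auto intro: inj_onI)
  have "(*) x ` G = G" by (rule endo_inj_surj) (use assms inj in auto)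
  then have "(\<Prod>y\<in>G. x * y) = \<Prod>G"
    using prod.reindex[OF inj, of "\<lambda>y. y"] by (simp add: comp_def)
  moreover have "(\<Prod>y\<in>G. x * y) = x ^ card G * \<Prod>G"
    by (simp add: prod.distrib)
  moreover have "\<Prod>G \<noteq> 0" using assms by simp
  ultimately show ?thesis by simp
qed

lemma prime_CHAR: "prime CHAR('a::{finite,field})"
  by (rule prime_CHAR_semidom[OF finite_imp_CHAR_pos]) simp

lemma frobenius_add:
  assumes "prime_power q" and "card (UNIV :: 'a::{finite,field} set) = q ^ n"
  shows "(x + y :: 'a) ^ (q ^ d) = x ^ (q ^ d) + y ^ (q ^ d)"
proof -
  obtain p k where p: "prime p" "q = p ^ k" using assms(1) unfolding prime_power_def by blast
  have "CHAR('a) dvd p ^ (k * n)" using CHAR_dvd_CARD[where ?'a = 'a] assms(2) p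
    by (simp add: power_mult)
  then have "CHAR('a) = p" using prime_CHAR p(1) prime_dvd_power primes_dvd_imp_eq by metis
  then have "q ^ d = CHAR('a) ^ (k * d)" using p by (simp add: power_mult)
  then show ?thesis by (rule freshmans_dream'[OF prime_CHAR])
qed

lemma primitive_elem_nonzero:
  assumes "primitive_elem (\<alpha>::'a::{finite,field})" and "card (UNIV :: 'a set) > 2"
  shows "\<alpha> \<noteq> 0"
proof
  assume "\<alpha> = 0"
  then have "UNIV \<subseteq> {0, 1::'a}"
    using assms(1) unfolding primitive_elem_def by (metis insertCI power_0_left subsetI)
  then have "card (UNIV :: 'a set) \<le> card {0, 1::'a}" by (intro card_mono) auto
  then show False using assms(2) by simp
qed

lemma sum_if_eq_card: "(\<Sum>i<(r::nat). if P i then c else 0) = (c::nat) * card {i. i < r \<and> P i}"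
proof -
  have "(\<Sum>i<r. if P i then c else 0) = (\<Sum>i\<in>{i \<in> {..<r}. P i}. c)"
    by (rule sum.inter_filter[symmetric]) simp
  also have "{i \<in> {..<r}. P i} = {i. i < r \<and> P i}" by auto
  finally show ?thesis by (simp add: mult.commute)
qed

lemma hd_less_last_if_sorted:
  assumes "sorted_wrt (<) xs" and "length xs \<ge> 2"
  shows "hd xs < last xs"
proof -
  have "xs \<noteq> []" using assms(2) by auto
  moreover have "xs ! 0 < xs ! (length xs - 1)"
    using assms by (intro sorted_wrt_nth_less[OF assms(1)]) auto
  ultimately show ?thesis by (simp add: hd_conv_nth last_conv_nth)
qed

lemma finite_image_pairs: "finite C \<Longrightarrow> finite {f x y | x y. x \<in> C \<and> y \<in> C \<and> P x y}"
  by (rule finite_subset[of _ "(\<lambda>(x, y). f x y) ` (C \<times> C)"]) auto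

section \<open>Powers of a primitive element\<close>

locale finite_field_extension =
  fixes \<alpha> :: "'a::{finite,field}" and q n m :: nat
  assumes q_prime_power: "prime_power q" and card_UNIV: "card (UNIV :: 'a set) = q ^ n"
    and n_pos: "n \<ge> 1" and m_dvd_n: "m dvd n"
    and primitive: "primitive_elem \<alpha>" and alpha_nonzero: "\<alpha> \<noteq> 0"
begin

definition N :: nat where "N = q ^ n - 1"
definition Q :: nat where "Q = q ^ m"
definition K :: "'a set" where "K = subfield q m"

lemma q_ge_2: "q \<ge> 2"
  using prime_power_ge_2 q_prime_power .

lemma N_pos: "N > 0"
  using q_ge_2 n_pos one_less_power[of q n] unfolding N_def by simp

lemma m_pos: "m > 0"
  using dvd_pos_nat[of n m] m_dvd_n n_pos by simp

lemma Q_gt_1: "Q > 1"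
  unfolding Q_def using q_ge_2 m_pos by (intro one_less_power) auto

lemma power_N_eq_one: "(x::'a) \<noteq> 0 \<Longrightarrow> x ^ N = 1"
  using power_card_eq_one[of "UNIV - {0::'a}" x] card_UNIV
  by (simp add: card_Diff_singleton N_def)

lemma power_q_n_eq_self: "(x::'a) ^ (q ^ n) = x"
proof (cases "x = 0")
  case True
  then show ?thesis using q_ge_2 by simp
next
  case False
  have "q ^ n = Suc N" using N_pos unfolding N_def by simp
  then show ?thesis using power_N_eq_one[OF False] by simp
qed

lemma inverse_eq_power:
  assumes "(x::'a) \<noteq> 0"
  shows "inverse x = x ^ (N - 1)"
proof (rule inverse_unique)
  have "x * x ^ (N - 1) = x ^ Suc (N - 1)" by simp
  also have "Suc (N - 1) = N" using N_pos by simp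
  finally show "x * x ^ (N - 1) = 1" using power_N_eq_one[OF assms] by simp
qed

lemma ex_alpha_power: "(x::'a) \<noteq> 0 \<Longrightarrow> \<exists>j. x = \<alpha> ^ j"
  using primitive unfolding primitive_elem_def by blast

lemma alpha_power_eq_one_iff: "\<alpha> ^ j = 1 \<longleftrightarrow> N dvd j"
proof
  assume "N dvd j"
  then show "\<alpha> ^ j = 1" using power_N_eq_one[OF alpha_nonzero] by (auto simp: power_mult)
next
  assume "\<alpha> ^ j = 1"
  then have one: "\<alpha> ^ (j mod N) = 1"
    using power_eq_power_mod[OF power_N_eq_one[OF alpha_nonzero]] by metis
  show "N dvd j"
  proof (rule ccontr)
    assume "\<not> N dvd j"
    then have pos: "j mod N > 0" by (simp add: mod_greater_zero_iff_not_dvd)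
    \<comment> \<open>the powers of \<open>\<alpha>\<close> would repeat with period \<open>j mod N < N\<close>, too few to exhaust the nonzero elements\<close>
    have "UNIV - {0::'a} \<subseteq> (\<lambda>i. \<alpha> ^ i) ` {..<j mod N}"
    proof
      fix x :: 'a assume "x \<in> UNIV - {0}"
      then obtain i where "x = \<alpha> ^ i" using ex_alpha_power by blast
      then have "x = \<alpha> ^ (i mod (j mod N))" using power_eq_power_mod[OF one] by simp
      then show "x \<in> (\<lambda>i. \<alpha> ^ i) ` {..<j mod N}" using pos by auto
    qed
    then have "card (UNIV - {0::'a}) \<le> card ((\<lambda>i. \<alpha> ^ i) ` {..<j mod N})"
      by (intro card_mono) auto
    also have "\<dots> \<le> j mod N"
      using card_image_le[of "{..<j mod N}" "\<lambda>i. \<alpha> ^ i"] by simp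
    also have "j mod N < N" using N_pos by simp
    finally show False
      using card_UNIV unfolding N_def by (simp add: card_Diff_singleton)
  qed
qed

lemma alpha_power_eq_iff: "\<alpha> ^ i = \<alpha> ^ j \<longleftrightarrow> i mod N = j mod N"
proof -
  have *: "\<alpha> ^ i = \<alpha> ^ j \<longleftrightarrow> i mod N = j mod N" if "i \<le> j" for i j
  proof -
    have "\<alpha> ^ j = \<alpha> ^ i * \<alpha> ^ (j - i)" using that by (simp flip: power_add)
    then have "\<alpha> ^ i = \<alpha> ^ j \<longleftrightarrow> \<alpha> ^ (j - i) = 1" using alpha_nonzero by auto
    also have "\<dots> \<longleftrightarrow> N dvd (j - i)" by (rule alpha_power_eq_one_iff)
    also have "\<dots> \<longleftrightarrow> j mod N = i mod N" using that by (simp add: mod_eq_dvd_iff_nat)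
    finally show ?thesis by auto
  qed
  show ?thesis by (cases "i \<le> j") (use *[of i j] *[of j i] in auto)
qed

lemma alpha_power_mult_eq_mod:
  assumes "t dvd N" and "\<alpha> ^ i = \<alpha> ^ j * \<alpha> ^ e" and "t dvd e"
  shows "i mod t = j mod t"
proof -
  have "i mod N = (j + e) mod N" using assms(2) by (simp add: power_add flip: alpha_power_eq_iff)
  then have "i mod t = (j + e) mod t" using assms(1) by (metis mod_mod_cancel)
  also have "\<dots> = j mod t" using assms(3) by (simp add: mod_add_right_eq[symmetric])
  finally show ?thesis .
qed

lemma card_multiples:
  assumes "t dvd N" and "t > 0"
  shows "card {\<alpha> ^ j | j. t dvd j} = N div t"
proof -
  obtain u where u: "N = t * u" using assms(1) by blast
  then have "N div t = u" "u > 0" using assms(2) N_pos by auto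
  have "{\<alpha> ^ j | j. t dvd j} = (\<lambda>k. \<alpha> ^ (t * k)) ` {..<u}"
  proof
    show "{\<alpha> ^ j | j. t dvd j} \<subseteq> (\<lambda>k. \<alpha> ^ (t * k)) ` {..<u}"
    proof
      fix x assume "x \<in> {\<alpha> ^ j | j. t dvd j}"
      then obtain k where x: "x = \<alpha> ^ (t * k)" by auto
      have "(t * k) mod N = (t * (k mod u)) mod N" unfolding u by (simp add: mod_mult_mult1)
      then have "x = \<alpha> ^ (t * (k mod u))" using x alpha_power_eq_iff by blast
      then show "x \<in> (\<lambda>k. \<alpha> ^ (t * k)) ` {..<u}" using \<open>u > 0\<close> by auto
    qed
  qed auto
  moreover have "inj_on (\<lambda>k. \<alpha> ^ (t * k)) {..<u}"
  proof (rule inj_onI)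
    fix a b assume "a \<in> {..<u}" "b \<in> {..<u}" "\<alpha> ^ (t * a) = \<alpha> ^ (t * b)"
    then have "(t * a) mod N = (t * b) mod N" "t * a < N" "t * b < N"
      using alpha_power_eq_iff assms(2) unfolding u by auto
    then show "a = b" using assms(2) by simp
  qed
  ultimately show ?thesis using \<open>N div t = u\<close> by (simp add: card_image)
qed

lemma subgroup_eq_multiples:
  fixes G :: "'a set"
  assumes "0 \<notin> G" and "1 \<in> G" and mult_closed: "\<And>x y. x \<in> G \<Longrightarrow> y \<in> G \<Longrightarrow> x * y \<in> G"
  shows "\<exists>t>0. t dvd N \<and> G = {\<alpha> ^ j | j. t dvd j}"
proof -
  have power_closed: "x ^ k \<in> G" if "x \<in> G" for x k
    by (induction k) (use assms that in auto)
  have inverse_closed: "inverse x \<in> G" if "x \<in> G" for x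
    using that assms(1) inverse_eq_power[of x] power_closed by (metis)
  define t where "t = (LEAST t. t > 0 \<and> \<alpha> ^ t \<in> G)"
  have "N > 0 \<and> \<alpha> ^ N \<in> G" using N_pos power_N_eq_one[OF alpha_nonzero] assms(2) by simp
  then have t: "t > 0" "\<alpha> ^ t \<in> G" unfolding t_def by (metis (mono_tags, lifting) LeastI)+
  have t_least: "t \<le> s" if "0 < s" and "\<alpha> ^ s \<in> G" for s
    unfolding t_def by (rule Least_le) (use that in simp)
  have dvd_if_mem: "t dvd j" if "\<alpha> ^ j \<in> G" for j
  proof (rule ccontr)
    assume "\<not> t dvd j"
    then have "j mod t > 0" by (simp add: mod_greater_zero_iff_not_dvd)
    have "\<alpha> ^ (j mod t) = \<alpha> ^ j * inverse ((\<alpha> ^ t) ^ (j div t))"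
      using power_div_mod[of \<alpha> j t] alpha_nonzero by (simp add: field_simps)
    then have "\<alpha> ^ (j mod t) \<in> G"
      using mult_closed inverse_closed power_closed t(2) that by simp
    then have "t \<le> j mod t" using t_least \<open>j mod t > 0\<close> by blast
    then show False using mod_less_divisor[OF t(1), of j] by linarith
  qed
  have "G = {\<alpha> ^ j | j. t dvd j}"
  proof
    show "G \<subseteq> {\<alpha> ^ j | j. t dvd j}"
    proof
      fix x assume "x \<in> G"
      then have "x \<noteq> 0" using assms(1) by auto
      then obtain j where "x = \<alpha> ^ j" using ex_alpha_power by blast
      moreover have "t dvd j" using dvd_if_mem \<open>x \<in> G\<close> calculation by simp
      ultimately show "x \<in> {\<alpha> ^ j | j. t dvd j}" by blast
    qed
    show "{\<alpha> ^ j | j. t dvd j} \<subseteq> G"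
      using power_closed[OF t(2)] by (auto simp: power_mult)
  qed
  moreover have "t dvd N" using dvd_if_mem[of N] power_N_eq_one[OF alpha_nonzero] assms(2) by simp
  ultimately show ?thesis using t(1) by blast
qed

corollary card_subgroup_dvd:
  fixes G :: "'a set"
  assumes "0 \<notin> G" and "1 \<in> G" and "\<And>x y. x \<in> G \<Longrightarrow> y \<in> G \<Longrightarrow> x * y \<in> G"
  shows "card G dvd N"
proof -
  obtain t where "t > 0" "t dvd N" "G = {\<alpha> ^ j | j. t dvd j}"
    using subgroup_eq_multiples[OF assms] by blast
  moreover obtain u where "N = t * u" using \<open>t dvd N\<close> by blast
  ultimately show ?thesis using card_multiples by simp
qed

lemma subfield_minus_zero:
  assumes "d dvd n"
  shows "subfield q d - {0::'a} = {\<alpha> ^ j | j. N div (q ^ d - 1) dvd j}"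
proof -
  define D where "D = q ^ d - 1"
  have "d > 0" using dvd_pos_nat[of n d] assms n_pos by simp
  then have "1 < q ^ d" using q_ge_2 by (intro one_less_power) auto
  then have "D > 0" unfolding D_def by simp
  have "D dvd N"
    using assms power_minus_one_dvd[of "q ^ d"] unfolding D_def N_def by (auto simp flip: power_mult)
  then have N_eq: "N = N div D * D" by simp
  have mem_iff: "\<alpha> ^ j \<in> subfield q d \<longleftrightarrow> N div D dvd j" for j
  proof -
    have le: "j \<le> j * q ^ d" using \<open>1 < q ^ d\<close> by simp
    have "\<alpha> ^ j \<in> subfield q d \<longleftrightarrow> \<alpha> ^ (j * q ^ d) = \<alpha> ^ j"
      unfolding subfield_def by (simp add: power_mult)
    also have "\<dots> \<longleftrightarrow> N dvd (j * q ^ d - j)"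
      using alpha_power_eq_iff mod_eq_dvd_iff_nat[OF le] by simp
    also have "j * q ^ d - j = j * D" unfolding D_def by (simp add: diff_mult_distrib2)
    also have "N dvd j * D \<longleftrightarrow> N div D dvd j"
      using \<open>D > 0\<close> by (subst N_eq) simp
    finally show ?thesis .
  qed
  show ?thesis
  proof
    show "subfield q d - {0} \<subseteq> {\<alpha> ^ j | j. N div (q ^ d - 1) dvd j}"
    proof
      fix x :: 'a assume x: "x \<in> subfield q d - {0}"
      then obtain j where "x = \<alpha> ^ j" using ex_alpha_power by blast
      then show "x \<in> {\<alpha> ^ j | j. N div (q ^ d - 1) dvd j}" using mem_iff x unfolding D_def by auto
    qed
    show "{\<alpha> ^ j | j. N div (q ^ d - 1) dvd j} \<subseteq> subfield q d - {0}"
      using mem_iff alpha_nonzero unfolding D_def by auto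
  qed
qed

lemma card_subfield:
  assumes "d dvd n"
  shows "card (subfield q d :: 'a set) = q ^ d"
proof -
  define D where "D = q ^ d - 1"
  have "d > 0" using dvd_pos_nat[of n d] assms n_pos by simp
  then have "1 < q ^ d" using q_ge_2 by (intro one_less_power) auto
  have "D dvd N"
    using assms power_minus_one_dvd[of "q ^ d"] unfolding D_def N_def by (auto simp flip: power_mult)
  then obtain t where t: "N = D * t" by blast
  then have "t > 0" "t dvd N" "N div t = D" "N div D = t"
    using N_pos \<open>1 < q ^ d\<close> unfolding D_def by auto
  then have "card (subfield q d - {0::'a}) = D"
    using subfield_minus_zero[OF assms] card_multiples unfolding D_def by simp
  moreover have "(0::'a) \<in> subfield q d" unfolding subfield_def using q_ge_2 by simp
  ultimately show ?thesis using \<open>1 < q ^ d\<close> unfolding D_def by (simp add: card_Diff_singleton)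
qed

lemma K_zero [simp]: "0 \<in> K"
  unfolding K_def subfield_def using q_ge_2 by simp

lemma K_one [simp]: "1 \<in> K"
  unfolding K_def subfield_def by simp

lemma K_mult: "x \<in> K \<Longrightarrow> y \<in> K \<Longrightarrow> x * y \<in> K"
  unfolding K_def subfield_def by (simp add: power_mult_distrib)

lemma K_add: "x \<in> K \<Longrightarrow> y \<in> K \<Longrightarrow> x + y \<in> K"
  unfolding K_def subfield_def by (simp add: frobenius_add[OF q_prime_power card_UNIV])

lemma K_uminus: "x \<in> K \<Longrightarrow> - x \<in> K"
proof -
  assume "x \<in> K"
  then have x: "x ^ q ^ m = x" unfolding K_def subfield_def by simp
  have "x ^ q ^ m + (- x) ^ q ^ m = (x + - x) ^ q ^ m"
    by (rule frobenius_add[OF q_prime_power card_UNIV, symmetric])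
  also have "\<dots> = 0" using q_ge_2 by simp
  finally have "(- x) ^ q ^ m = - x" using x by (simp add: add_eq_0_iff)
  then show "- x \<in> K" unfolding K_def subfield_def by simp
qed

lemma K_diff: "x \<in> K \<Longrightarrow> y \<in> K \<Longrightarrow> x - y \<in> K"
  using K_add K_uminus by (metis diff_conv_add_uminus)

lemma K_inverse: "x \<in> K \<Longrightarrow> inverse x \<in> K"
  unfolding K_def subfield_def by (simp add: power_inverse)

lemma K_divide: "x \<in> K \<Longrightarrow> y \<in> K \<Longrightarrow> x / y \<in> K"
  by (simp add: divide_inverse K_mult K_inverse)

lemma card_K: "card K = Q"
  unfolding K_def Q_def by (rule card_subfield[OF m_dvd_n])

section \<open>Subspaces over the subfield\<close>

definition ksubspace :: "'a set \<Rightarrow> bool" where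
  "ksubspace W \<longleftrightarrow> 0 \<in> W \<and> (\<forall>u\<in>W. \<forall>v\<in>W. u + v \<in> W) \<and> (\<forall>c\<in>K. \<forall>u\<in>W. c * u \<in> W)"

lemma ksubspace_zero: "ksubspace W \<Longrightarrow> 0 \<in> W"
  unfolding ksubspace_def by blast

lemma ksubspace_add: "ksubspace W \<Longrightarrow> u \<in> W \<Longrightarrow> v \<in> W \<Longrightarrow> u + v \<in> W"
  unfolding ksubspace_def by blast

lemma ksubspace_smult: "ksubspace W \<Longrightarrow> c \<in> K \<Longrightarrow> u \<in> W \<Longrightarrow> c * u \<in> W"
  unfolding ksubspace_def by blast

lemma ksubspace_diff: "ksubspace W \<Longrightarrow> u \<in> W \<Longrightarrow> v \<in> W \<Longrightarrow> u - v \<in> W"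
  using ksubspace_add[of W u "(- 1) * v"] ksubspace_smult[of W "- 1" v] K_uminus[OF K_one] by simp

lemma ksubspace_sum: "ksubspace W \<Longrightarrow> (\<And>i. i \<in> A \<Longrightarrow> f i \<in> W) \<Longrightarrow> sum f A \<in> W"
  by (induction A rule: infinite_finite_induct) (auto simp: ksubspace_zero ksubspace_add)

lemma ksubspace_Int: "ksubspace U \<Longrightarrow> ksubspace V \<Longrightarrow> ksubspace (U \<inter> V)"
  unfolding ksubspace_def by blast

lemma ksubspace_ssum:
  assumes U: "ksubspace U" and V: "ksubspace V"
  shows "ksubspace (ssum U V)"
  unfolding ksubspace_def
proof (intro conjI ballI)
  show "0 \<in> ssum U V" unfolding ssum_def using ksubspace_zero[OF U] ksubspace_zero[OF V] by force
next
  fix x y assume "x \<in> ssum U V" "y \<in> ssum U V"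
  then obtain u v u' v' where "x = u + v" "y = u' + v'" "u \<in> U" "v \<in> V" "u' \<in> U" "v' \<in> V"
    unfolding ssum_def by blast
  then have "x + y = (u + u') + (v + v')" "u + u' \<in> U" "v + v' \<in> V"
    using ksubspace_add[OF U] ksubspace_add[OF V] by (auto simp: algebra_simps)
  then show "x + y \<in> ssum U V" unfolding ssum_def by blast
next
  fix c x assume "c \<in> K" "x \<in> ssum U V"
  then obtain u v where "x = u + v" "u \<in> U" "v \<in> V" unfolding ssum_def by blast
  moreover have "c * u \<in> U" "c * v \<in> V"
    using ksubspace_smult[OF U \<open>c \<in> K\<close>] ksubspace_smult[OF V \<open>c \<in> K\<close>] calculation by auto
  moreover have "c * x = c * u + c * v" using calculation by (simp add: algebra_simps)
  ultimately show "c * x \<in> ssum U V" unfolding ssum_def by blast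
qed

lemma subset_ssum_left: "ksubspace V \<Longrightarrow> U \<subseteq> ssum U V"
proof
  fix u assume "ksubspace V" and "u \<in> U"
  then have "u + 0 \<in> ssum U V" unfolding ssum_def using ksubspace_zero by blast
  then show "u \<in> ssum U V" by simp
qed

lemma subset_ssum_right: "ksubspace U \<Longrightarrow> V \<subseteq> ssum U V"
proof
  fix v assume "ksubspace U" and "v \<in> V"
  then have "0 + v \<in> ssum U V" unfolding ssum_def using ksubspace_zero by blast
  then show "v \<in> ssum U V" by simp
qed

lemma ssum_subset: "ksubspace S \<Longrightarrow> U \<subseteq> S \<Longrightarrow> V \<subseteq> S \<Longrightarrow> ssum U V \<subseteq> S"
  unfolding ssum_def using ksubspace_add by blast

lemma ssum_self: "ksubspace U \<Longrightarrow> ssum U U = U"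
  using subset_ssum_left ssum_subset by blast

lemma ksubspace_image_mult:
  assumes W: "ksubspace W"
  shows "ksubspace ((\<lambda>x. x * g) ` W)"
  unfolding ksubspace_def
proof (intro conjI ballI)
  show "0 \<in> (\<lambda>x. x * g) ` W" using ksubspace_zero[OF W] by force
next
  fix x y assume "x \<in> (\<lambda>x. x * g) ` W" "y \<in> (\<lambda>x. x * g) ` W"
  then obtain u v where "x = u * g" "y = v * g" "u \<in> W" "v \<in> W" by blast
  then have "x + y = (u + v) * g" "u + v \<in> W" using ksubspace_add[OF W] by (auto simp: algebra_simps)
  then show "x + y \<in> (\<lambda>x. x * g) ` W" by blast
next
  fix c x assume "c \<in> K" "x \<in> (\<lambda>x. x * g) ` W"
  then obtain u where "x = u * g" "u \<in> W" by blast
  moreover have "c * u \<in> W" using ksubspace_smult[OF W \<open>c \<in> K\<close>] calculation by simp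
  moreover have "c * x = (c * u) * g" using calculation by (simp add: algebra_simps)
  ultimately show "c * x \<in> (\<lambda>x. x * g) ` W" by blast
qed

lemma card_image_mult: "(g::'a) \<noteq> 0 \<Longrightarrow> card ((\<lambda>x. x * g) ` U) = card U"
  by (rule card_image) (auto intro: inj_onI)

lemma image_mult_K_ksubspace:
  assumes "ksubspace W" and "c \<in> K" and "c \<noteq> 0"
  shows "(\<lambda>x. x * c) ` W = W"
proof -
  have "(\<lambda>x. x * c) ` W \<subseteq> W" using ksubspace_smult[OF assms(1,2)] by (auto simp: mult.commute)
  then show ?thesis using card_image_mult[OF assms(3)] by (simp add: card_subset_eq)
qed

lemma ksubspace_extend:
  assumes W: "ksubspace W" and w: "w \<notin> W"
  defines "W' \<equiv> {u + c * w | u c. u \<in> W \<and> c \<in> K}"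
  shows "ksubspace W'" and "W \<subseteq> W'" and "w \<in> W'" and "card W' = Q * card W"
proof -
  show "ksubspace W'" unfolding ksubspace_def
  proof (intro conjI ballI)
    show "0 \<in> W'" unfolding W'_def using ksubspace_zero[OF W] K_zero by force
  next
    fix x y assume "x \<in> W'" "y \<in> W'"
    then obtain u c u' c' where "x = u + c * w" "y = u' + c' * w" "u \<in> W" "c \<in> K" "u' \<in> W" "c' \<in> K"
      unfolding W'_def by blast
    then have "x + y = (u + u') + (c + c') * w" "u + u' \<in> W" "c + c' \<in> K"
      using ksubspace_add[OF W] K_add by (auto simp: algebra_simps)
    then show "x + y \<in> W'" unfolding W'_def by blast
  next
    fix d x assume "d \<in> K" "x \<in> W'"
    then obtain u c where "x = u + c * w" "u \<in> W" "c \<in> K" unfolding W'_def by blast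
    moreover have "d * u \<in> W" "d * c \<in> K"
      using ksubspace_smult[OF W \<open>d \<in> K\<close>] K_mult[OF \<open>d \<in> K\<close>] calculation by auto
    moreover have "d * x = d * u + (d * c) * w" using calculation by (simp add: algebra_simps)
    ultimately show "d * x \<in> W'" unfolding W'_def by blast
  qed
  show "W \<subseteq> W'" unfolding W'_def by (force intro: exI[of _ 0])
  show "w \<in> W'" unfolding W'_def using ksubspace_zero[OF W] by (force intro: exI[of _ 1])
  have "inj_on (\<lambda>(u, c). u + c * w) (W \<times> K)"
  proof (rule inj_onI, clarify)
    fix u c u' c' assume h: "u \<in> W" "c \<in> K" "u' \<in> W" "c' \<in> K" "u + c * w = u' + c' * w"
    show "u = u' \<and> c = c'"
    proof (cases "c = c'")
      case False
      \<comment> \<open>otherwise \<open>w = (u' - u) / (c - c')\<close> would lie in \<open>W\<close>\<close>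
      then have "w = inverse (c - c') * (u' - u)" using h(5) by (simp add: field_simps)
      moreover have "inverse (c - c') * (u' - u) \<in> W"
        using ksubspace_smult[OF W K_inverse[OF K_diff[OF h(2,4)]] ksubspace_diff[OF W h(3,1)]] .
      ultimately show ?thesis using w by simp
    qed (use h in simp)
  qed
  moreover have "W' = (\<lambda>(u, c). u + c * w) ` (W \<times> K)" unfolding W'_def by auto
  ultimately show "card W' = Q * card W" by (simp add: card_image card_cartesian_product card_K)
qed

lemma card_ksubspace_ratio:
  assumes "ksubspace W" and "ksubspace W'" and "W \<subseteq> W'"
  shows "\<exists>e. card W' = Q ^ e * card W"
  using assms
proof (induction "card W' - card W" arbitrary: W rule: less_induct)
  case less
  show ?case
  proof (cases "W = W'")
    case False
    then obtain w where w: "w \<in> W'" "w \<notin> W" using less.prems by blast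
    define W1 where "W1 = {u + c * w | u c. u \<in> W \<and> c \<in> K}"
    have W1: "ksubspace W1" "W \<subseteq> W1" "card W1 = Q * card W"
      unfolding W1_def using ksubspace_extend[OF less.prems(1) w(2)] by auto
    have "W1 \<subseteq> W'"
      unfolding W1_def using ksubspace_add ksubspace_smult less.prems w(1) by blast
    moreover have "card W > 0" using ksubspace_zero[OF less.prems(1)] by (auto simp: card_gt_0_iff)
    then have "card W < card W1" using W1(3) Q_gt_1 by simp
    moreover have "card W1 \<le> card W'" using \<open>W1 \<subseteq> W'\<close> by (simp add: card_mono)
    ultimately have "card W' - card W1 < card W' - card W" by linarith
    then obtain e where "card W' = Q ^ e * card W1"
      using less.hyps W1(1) less.prems(2) \<open>W1 \<subseteq> W'\<close> by blast
    then have "card W' = Q ^ Suc e * card W" using W1(3) by simp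
    then show ?thesis by blast
  qed (intro exI[of _ 0], simp)
qed

lemma card_ksubspace: "ksubspace W \<Longrightarrow> \<exists>a. card W = Q ^ a"
  using card_ksubspace_ratio[of "{0}" W] ksubspace_zero[of W]
  by (auto simp: ksubspace_def)

lemma dimq_eq: "card W = Q ^ a \<Longrightarrow> dimq q W = m * a"
  unfolding dimq_def Q_def
  by (rule the_equality) (use q_ge_2 in \<open>simp_all add: power_inject_exp flip: power_mult\<close>)

lemma subspace_dist_eq:
  "card (U \<inter> V) = Q ^ a \<Longrightarrow> card (ssum U V) = Q ^ b \<Longrightarrow> subspace_dist q U V = m * (b - a)"
  unfolding subspace_dist_def by (simp add: dimq_eq diff_mult_distrib2)

lemma two_m_le_subspace_dist:
  assumes U: "ksubspace U" and V: "ksubspace V" and "card U = card V" and "U \<noteq> V"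
  shows "2 * m \<le> subspace_dist q U V"
proof -
  obtain k where k: "card U = Q ^ k" using card_ksubspace[OF U] by blast
  obtain a where a: "card (U \<inter> V) = Q ^ a" using card_ksubspace[OF ksubspace_Int[OF U V]] by blast
  obtain b where b: "card (ssum U V) = Q ^ b" using card_ksubspace[OF ksubspace_ssum[OF U V]] by blast
  have "\<not> U \<subseteq> V" and "\<not> V \<subseteq> U"
    using assms card_subset_eq[of V U] card_subset_eq[of U V] by auto
  then have "U \<inter> V \<subset> U" and "U \<subset> ssum U V"
    using subset_ssum_left[OF V, of U] subset_ssum_right[OF U, of V] by auto
  then have "card (U \<inter> V) < card U" and "card U < card (ssum U V)"
    by (auto intro: psubset_card_mono)
  then have "a < k" and "k < b" using a b k Q_gt_1 by (auto simp: power_strict_increasing_iff)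
  then have "2 \<le> b - a" by simp
  then have "2 * m \<le> m * (b - a)" using mult_le_mono1[of 2 "b - a" m] by (simp add: mult.commute)
  then show ?thesis using subspace_dist_eq[OF a b] by simp
qed

lemma subspace_dist_le_two_m:
  assumes U: "ksubspace U" and V: "ksubspace V" and S: "ksubspace S"
    and "I \<subseteq> U \<inter> V" and "card I = Q ^ k" and "U \<subseteq> S" and "V \<subseteq> S" and "card S \<le> Q ^ (k + 2)"
  shows "subspace_dist q U V \<le> 2 * m"
proof -
  obtain a where a: "card (U \<inter> V) = Q ^ a" using card_ksubspace[OF ksubspace_Int[OF U V]] by blast
  obtain b where b: "card (ssum U V) = Q ^ b" using card_ksubspace[OF ksubspace_ssum[OF U V]] by blast
  have "Q ^ k \<le> Q ^ a" using card_mono[of "U \<inter> V" I] assms a by simp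
  then have "k \<le> a" by (rule power_increasing_iff[OF Q_gt_1, THEN iffD1])
  have "Q ^ b \<le> Q ^ (k + 2)"
    using card_mono[of S "ssum U V"] ssum_subset[OF S] assms b by simp
  then have "b \<le> k + 2" by (rule power_increasing_iff[OF Q_gt_1, THEN iffD1])
  with \<open>k \<le> a\<close> have "b - a \<le> 2" by simp
  then show ?thesis using subspace_dist_eq[OF a b] by simp
qed

section \<open>Spans of consecutive powers\<close>

definition kspan :: "'a \<Rightarrow> nat \<Rightarrow> 'a set" where
  "kspan b k = fspan q m k (\<lambda>j. b ^ j)"

lemma in_kspan_iff: "x \<in> kspan b k \<longleftrightarrow> (\<exists>c. (\<forall>j<k. c j \<in> K) \<and> x = (\<Sum>j<k. c j * b ^ j))"
  unfolding kspan_def fspan_def K_def by blast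

lemma sum_in_kspan: "(\<And>j. j < k \<Longrightarrow> c j \<in> K) \<Longrightarrow> (\<Sum>j<k. c j * b ^ j) \<in> kspan b k"
  using in_kspan_iff by blast

lemma ksubspace_kspan: "ksubspace (kspan b k)"
  unfolding ksubspace_def
proof (intro conjI ballI)
  show "0 \<in> kspan b k" using sum_in_kspan[of k "\<lambda>_. 0" b] by simp
next
  fix x y assume "x \<in> kspan b k" "y \<in> kspan b k"
  then obtain c d where "\<forall>j<k. c j \<in> K" "x = (\<Sum>j<k. c j * b ^ j)"
    and "\<forall>j<k. d j \<in> K" "y = (\<Sum>j<k. d j * b ^ j)" unfolding in_kspan_iff by blast
  moreover have "(\<Sum>j<k. (c j + d j) * b ^ j) \<in> kspan b k"
    by (rule sum_in_kspan) (use calculation K_add in auto)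
  ultimately show "x + y \<in> kspan b k" by (simp add: sum.distrib distrib_right)
next
  fix a x assume "a \<in> K" "x \<in> kspan b k"
  then obtain c where "\<forall>j<k. c j \<in> K" "x = (\<Sum>j<k. c j * b ^ j)" unfolding in_kspan_iff by blast
  moreover have "(\<Sum>j<k. (a * c j) * b ^ j) \<in> kspan b k"
    by (rule sum_in_kspan) (use calculation \<open>a \<in> K\<close> K_mult in auto)
  ultimately show "a * x \<in> kspan b k" by (simp add: sum_distrib_left mult.assoc)
qed

lemma kspan_mono: "k \<le> k' \<Longrightarrow> kspan b k \<subseteq> kspan b k'"
proof
  fix x assume "k \<le> k'" and "x \<in> kspan b k"
  then obtain c where c: "\<forall>j<k. c j \<in> K" "x = (\<Sum>j<k. c j * b ^ j)" unfolding in_kspan_iff by blast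
  define c' where "c' j = (if j < k then c j else 0)" for j
  have "(\<Sum>j<k'. c' j * b ^ j) = (\<Sum>j<k. c' j * b ^ j)"
    by (rule sum.mono_neutral_right) (use \<open>k \<le> k'\<close> in \<open>auto simp: c'_def\<close>)
  also have "\<dots> = x" unfolding c(2) by (rule sum.cong) (auto simp: c'_def)
  finally show "x \<in> kspan b k'"
    using sum_in_kspan[of k' c' b] c(1) by (auto simp: c'_def)
qed

lemma power_in_kspan:
  assumes "j < k"
  shows "b ^ j \<in> kspan b k"
proof -
  have "(\<Sum>i<k. (if i = j then 1 else 0) * b ^ i) = (\<Sum>i<k. if i = j then b ^ j else 0)"
    by (rule sum.cong) auto
  also have "\<dots> = b ^ j" using assms by simp
  finally show ?thesis using sum_in_kspan[of k "\<lambda>i. if i = j then 1 else 0" b] by simp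
qed

lemma sum_powers_times_base:
  "(\<Sum>j<k. c j * b ^ j) * (b::'a) = (\<Sum>j<Suc k. (if j = 0 then 0 else c (j - 1)) * b ^ j)"
proof -
  define c' where "c' j = (if j = 0 then 0 else c (j - 1))" for j
  have "(\<Sum>j<Suc k. c' j * b ^ j) = c' 0 * b ^ 0 + (\<Sum>j<k. c' (Suc j) * b ^ Suc j)"
    by (rule sum.lessThan_Suc_shift)
  also have "\<dots> = (\<Sum>j<k. c j * b ^ j * b)"
    unfolding c'_def by (simp del: power_Suc add: power_Suc2 mult.assoc)
  also have "\<dots> = (\<Sum>j<k. c j * b ^ j) * b" by (simp add: sum_distrib_right)
  finally show ?thesis unfolding c'_def by simp
qed

lemma kspan_times_base: "x \<in> kspan b k \<Longrightarrow> x * b \<in> kspan b (Suc k)"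
proof -
  assume "x \<in> kspan b k"
  then obtain c where c: "\<forall>j<k. c j \<in> K" "x = (\<Sum>j<k. c j * b ^ j)" unfolding in_kspan_iff by blast
  have "(\<Sum>j<Suc k. (if j = 0 then 0 else c (j - 1)) * b ^ j) \<in> kspan b (Suc k)"
    by (rule sum_in_kspan) (use c(1) in auto)
  then show ?thesis unfolding c(2) sum_powers_times_base .
qed

lemma kspan_one: "kspan b 1 = K"
proof
  show "kspan b 1 \<subseteq> K"
  proof
    fix x assume "x \<in> kspan b 1"
    then obtain c where "\<forall>j<1. c j \<in> K" "x = (\<Sum>j<1. c j * b ^ j)" unfolding in_kspan_iff by blast
    then show "x \<in> K" by simp
  qed
  show "K \<subseteq> kspan b 1" using sum_in_kspan[of 1 "\<lambda>_. _" b] by auto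
qed

lemma kspan_eq_image: "kspan b k = (\<lambda>c. \<Sum>j<k. c j * b ^ j) ` (PiE {..<k} (\<lambda>_. K))"
proof
  show "kspan b k \<subseteq> (\<lambda>c. \<Sum>j<k. c j * b ^ j) ` (PiE {..<k} (\<lambda>_. K))"
  proof
    fix x assume "x \<in> kspan b k"
    then obtain c where c: "\<forall>j<k. c j \<in> K" "x = (\<Sum>j<k. c j * b ^ j)" unfolding in_kspan_iff by blast
    then have "restrict c {..<k} \<in> PiE {..<k} (\<lambda>_. K)" "x = (\<Sum>j<k. restrict c {..<k} j * b ^ j)"
      by auto
    then show "x \<in> (\<lambda>c. \<Sum>j<k. c j * b ^ j) ` (PiE {..<k} (\<lambda>_. K))" by blast
  qed
  show "(\<lambda>c. \<Sum>j<k. c j * b ^ j) ` (PiE {..<k} (\<lambda>_. K)) \<subseteq> kspan b k"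
    using sum_in_kspan by auto
qed

lemma card_kspan_le: "card (kspan b k) \<le> Q ^ k"
proof -
  have "card (kspan b k) \<le> card (PiE {..<k} (\<lambda>_. K))"
    unfolding kspan_eq_image by (rule card_image_le) (simp add: finite_PiE)
  then show ?thesis by (simp add: card_PiE card_K)
qed

definition annihilating_poly :: "'a \<Rightarrow> nat \<Rightarrow> 'a poly \<Rightarrow> bool" where
  "annihilating_poly b d p \<longleftrightarrow>
     p \<noteq> 0 \<and> degree p = d \<and> (\<forall>i. Polynomial.coeff p i \<in> subfield q m) \<and> poly p b = 0"

lemma minpoly_degree_eq: "minpoly_degree q m (b::'a) = (LEAST d. \<exists>p. annihilating_poly b d p)"
  unfolding minpoly_degree_def annihilating_poly_def by simp

lemma ex_minpoly: "\<exists>p. annihilating_poly b (minpoly_degree q m b) p"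
proof -
  define p :: "'a poly" where "p = Polynomial.monom 1 (q ^ n) - Polynomial.monom 1 1"
  have "q ^ n = Suc N" using N_pos unfolding N_def by simp
  then have "Polynomial.coeff p (q ^ n) = 1" unfolding p_def using N_pos by (simp add: coeff_monom)
  moreover have "Polynomial.coeff p i \<in> K" for i
    unfolding p_def by (auto simp: coeff_monom intro!: K_diff K_uminus)
  moreover have "poly p b = 0"
    unfolding p_def by (simp add: poly_monom power_q_n_eq_self)
  moreover have "p \<noteq> 0" using calculation(1) by auto
  ultimately have "annihilating_poly b (degree p) p"
    unfolding annihilating_poly_def K_def by auto
  then have "\<exists>d p. annihilating_poly b d p" by blast
  then show ?thesis unfolding minpoly_degree_eq by (rule LeastI_ex)
qed

lemma minpoly_degree_le: "annihilating_poly (b::'a) d p \<Longrightarrow> minpoly_degree q m b \<le> d"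
  unfolding minpoly_degree_eq by (intro Least_le exI)

lemma minpoly_degree_pos: "minpoly_degree q m (b::'a) > 0"
proof (rule ccontr)
  assume "\<not> minpoly_degree q m b > 0"
  moreover obtain p where "annihilating_poly b (minpoly_degree q m b) p" using ex_minpoly by blast
  ultimately have "degree p = 0" "p \<noteq> 0" "poly p b = 0" unfolding annihilating_poly_def by auto
  moreover have "poly p b = Polynomial.coeff p 0" using \<open>degree p = 0\<close> by (simp add: poly_altdef)
  moreover have "Polynomial.coeff p (degree p) \<noteq> 0" using \<open>p \<noteq> 0\<close> by simp
  ultimately show False by simp
qed

lemma powers_independent:
  assumes "k \<le> minpoly_degree q m b" and "\<forall>j<k. e j \<in> K" and "(\<Sum>j<k. e j * b ^ j) = 0"
    and "j < k"
  shows "e j = 0"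
proof (rule ccontr)
  assume "e j \<noteq> 0"
  define p where "p = (\<Sum>i<k. Polynomial.monom (e i) i)"
  have coeff_p: "Polynomial.coeff p i = (if i < k then e i else 0)" for i
    unfolding p_def coeff_sum by (simp add: coeff_monom)
  have "p \<noteq> 0" using coeff_p[of j] \<open>e j \<noteq> 0\<close> assms(4) by auto
  moreover have "Polynomial.coeff p i \<in> subfield q m" for i
    using coeff_p[of i] assms(2) K_zero unfolding K_def by auto
  moreover have "poly p b = 0" unfolding p_def poly_sum poly_monom using assms(3) .
  ultimately have "minpoly_degree q m b \<le> degree p"
    by (intro minpoly_degree_le[of b _ p]) (simp add: annihilating_poly_def)
  moreover have "degree p \<le> k - 1" by (rule degree_le) (use coeff_p in auto)
  ultimately show False using assms(1,4) by simp
qed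

lemma kspan_coeffs_unique:
  assumes "k \<le> minpoly_degree q m b" and c: "\<forall>j<k. c j \<in> K" and d: "\<forall>j<k. d j \<in> K"
    and eq: "(\<Sum>j<k. c j * b ^ j) = (\<Sum>j<k. d j * b ^ j)" and "i < k"
  shows "c i = d i"
proof -
  have "(\<Sum>j<k. (c j - d j) * b ^ j) = (\<Sum>j<k. c j * b ^ j) - (\<Sum>j<k. d j * b ^ j)"
    by (simp add: left_diff_distrib sum_subtractf)
  then have "(\<Sum>j<k. (c j - d j) * b ^ j) = 0" using eq by simp
  moreover have "\<forall>j<k. c j - d j \<in> K" using c d K_diff by blast
  ultimately have "c i - d i = 0" by (rule powers_independent[OF assms(1) _ _ \<open>i < k\<close>, rotated])
  then show ?thesis by simp
qed

lemma card_kspan: "k \<le> minpoly_degree q m b \<Longrightarrow> card (kspan b k) = Q ^ k"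
proof -
  assume k: "k \<le> minpoly_degree q m b"
  have "inj_on (\<lambda>c. \<Sum>j<k. c j * b ^ j) (PiE {..<k} (\<lambda>_. K))"
  proof (rule inj_onI)
    fix c d assume c: "c \<in> PiE {..<k} (\<lambda>_. K)" and d: "d \<in> PiE {..<k} (\<lambda>_. K)"
      and "(\<Sum>j<k. c j * b ^ j) = (\<Sum>j<k. d j * b ^ j)"
    then have "c j = d j" if "j < k" for j
      using kspan_coeffs_unique[OF k _ _ _ that, of c d] by (auto simp: PiE_iff)
    then show "c = d" using PiE_ext[OF c d] by simp
  qed
  then show ?thesis unfolding kspan_eq_image by (simp add: card_image card_PiE card_K)
qed

lemma power_minpoly_degree_in_kspan:
  "b ^ minpoly_degree q m b \<in> kspan b (minpoly_degree q m b)"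
proof -
  define L where "L = minpoly_degree q m b"
  obtain p where "annihilating_poly b L p" using ex_minpoly unfolding L_def by blast
  then have deg: "degree p = L" and "p \<noteq> 0" and coeff_K: "\<And>i. Polynomial.coeff p i \<in> K"
    and root: "poly p b = 0" unfolding annihilating_poly_def K_def by auto
  define a where "a = Polynomial.coeff p L"
  have "a \<noteq> 0" "a \<in> K" unfolding a_def using \<open>p \<noteq> 0\<close> deg coeff_K by auto
  have "0 = (\<Sum>i<L. Polynomial.coeff p i * b ^ i) + a * b ^ L"
    using root unfolding poly_altdef deg a_def by (simp add: lessThan_Suc_atMost[symmetric])
  then have eq: "a * b ^ L = - (\<Sum>i<L. Polynomial.coeff p i * b ^ i)"
    by (simp add: eq_neg_iff_add_eq_0 add.commute)
  have "b ^ L = (1 / a) * (a * b ^ L)" using \<open>a \<noteq> 0\<close> by simp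
  also have "\<dots> = (\<Sum>i<L. (- (Polynomial.coeff p i / a)) * b ^ i)"
    unfolding eq by (simp add: sum_distrib_left sum_negf)
  also have "\<dots> \<in> kspan b L"
    by (rule sum_in_kspan) (intro K_uminus K_divide coeff_K \<open>a \<in> K\<close>)
  finally show ?thesis unfolding L_def .
qed

lemma kspan_Suc_minpoly_degree:
  "kspan b (Suc (minpoly_degree q m b)) = kspan b (minpoly_degree q m b)"
proof
  let ?L = "minpoly_degree q m b"
  show "kspan b (Suc ?L) \<subseteq> kspan b ?L"
  proof
    fix x assume "x \<in> kspan b (Suc ?L)"
    then obtain c where c: "\<forall>j<Suc ?L. c j \<in> K" "x = (\<Sum>j<Suc ?L. c j * b ^ j)"
      unfolding in_kspan_iff by blast
    have "(\<Sum>j<?L. c j * b ^ j) \<in> kspan b ?L" by (rule sum_in_kspan) (use c(1) in simp)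
    moreover have "c ?L * b ^ ?L \<in> kspan b ?L"
      using ksubspace_smult[OF ksubspace_kspan] c(1) power_minpoly_degree_in_kspan by simp
    ultimately show "x \<in> kspan b ?L"
      using ksubspace_add[OF ksubspace_kspan] c(2) by simp
  qed
qed (rule kspan_mono, simp)

lemma kspan_minpoly_degree_mult:
  assumes x: "x \<in> kspan b (minpoly_degree q m b)" and y: "y \<in> kspan b (minpoly_degree q m b)"
  shows "x * y \<in> kspan b (minpoly_degree q m b)"
proof -
  let ?E = "kspan b (minpoly_degree q m b)"
  have times_power: "x * b ^ j \<in> ?E" for j
  proof (induction j)
    case (Suc j)
    then have "x * b ^ j * b \<in> ?E" using kspan_times_base kspan_Suc_minpoly_degree by blast
    then show ?case by (simp add: mult_ac)
  qed (use x in simp)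
  obtain c where c: "\<forall>j<minpoly_degree q m b. c j \<in> K" "y = (\<Sum>j<minpoly_degree q m b. c j * b ^ j)"
    using y unfolding in_kspan_iff by blast
  have "x * y = (\<Sum>j<minpoly_degree q m b. c j * (x * b ^ j))"
    unfolding c(2) by (simp add: sum_distrib_left mult_ac)
  also have "\<dots> \<in> ?E"
    by (rule ksubspace_sum[OF ksubspace_kspan], rule ksubspace_smult[OF ksubspace_kspan])
      (use c(1) times_power in auto)
  finally show ?thesis .
qed

lemma card_kspan_minpoly_degree_dvd: "Q ^ minpoly_degree q m (b::'a) - 1 dvd N"
proof -
  let ?E = "kspan b (minpoly_degree q m b)"
  have "1 \<in> ?E" using power_in_kspan[of 0 "minpoly_degree q m b" b] minpoly_degree_pos by simp
  then have "card (?E - {0}) dvd N"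
    by (intro card_subgroup_dvd) (auto intro: kspan_minpoly_degree_mult)
  then show ?thesis
    using card_kspan[of "minpoly_degree q m b" b] ksubspace_zero[OF ksubspace_kspan]
    by (simp add: card_Diff_singleton)
qed

lemma kspan_descend:
  assumes "Suc k < minpoly_degree q m b" and "y \<in> kspan b (Suc k)" and "y * b \<in> kspan b (Suc k)"
  shows "y \<in> kspan b k"
proof -
  obtain c where c: "\<forall>j<Suc k. c j \<in> K" "y = (\<Sum>j<Suc k. c j * b ^ j)"
    using assms(2) unfolding in_kspan_iff by blast
  obtain d where d: "\<forall>j<Suc k. d j \<in> K" "y * b = (\<Sum>j<Suc k. d j * b ^ j)"
    using assms(3) unfolding in_kspan_iff by blast
  define c' where "c' j = (if j = 0 then 0 else c (j - 1))" for j
  define d' where "d' j = (if j < Suc k then d j else 0)" for j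
  \<comment> \<open>compare two expansions of \<open>y b\<close> in the independent powers \<open>1, \<dots>, b ^ Suc k\<close>\<close>
  have "(\<Sum>j<Suc (Suc k). d' j * b ^ j) = (\<Sum>j<Suc k. d' j * b ^ j)"
    by (simp add: d'_def)
  also have "\<dots> = y * b" unfolding d(2) by (rule sum.cong) (auto simp: d'_def)
  also have "\<dots> = (\<Sum>j<Suc (Suc k). c' j * b ^ j)"
    unfolding c(2) c'_def by (rule sum_powers_times_base)
  finally have "d' (Suc k) = c' (Suc k)"
    by (rule kspan_coeffs_unique[of "Suc (Suc k)" b, rotated 3])
      (use c(1) d(1) assms(1) in \<open>auto simp: c'_def d'_def\<close>)
  then have "c k = 0" by (simp add: c'_def d'_def)
  then have "y = (\<Sum>j<k. c j * b ^ j)" using c(2) by simp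
  then show ?thesis using c(1) sum_in_kspan[of k c b] by simp
qed

lemma kspan_stabilizer:
  assumes "1 \<le> k" and "k < minpoly_degree q m b" and "\<And>x. x \<in> kspan b k \<Longrightarrow> g * x \<in> kspan b k"
  shows "g \<in> K"
  using assms
proof (induction k)
  case (Suc k)
  show ?case
  proof (cases "k = 0")
    case True
    then show ?thesis using Suc.prems(3)[of 1] kspan_one by simp
  next
    case False
    have "g * x \<in> kspan b k" if x: "x \<in> kspan b k" for x
    proof (rule kspan_descend)
      show "Suc k < minpoly_degree q m b" by (rule Suc.prems(2))
      show "g * x \<in> kspan b (Suc k)" using Suc.prems(3) kspan_mono[of k "Suc k" b] x by auto
      show "g * x * b \<in> kspan b (Suc k)"
        using Suc.prems(3)[OF kspan_times_base[OF x]] by (simp add: mult.assoc)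
    qed
    then show ?thesis using Suc.IH False Suc.prems(2) by simp
  qed
qed simp

lemma image_mult_kspan_eq:
  assumes "g / h \<in> K" and "g \<noteq> 0" and "h \<noteq> 0"
  shows "(\<lambda>x. x * g) ` kspan b k = (\<lambda>x. x * h) ` kspan b k"
proof -
  have "(\<lambda>x. x * h) ` (\<lambda>x. x * (g / h)) ` kspan b k = (\<lambda>x. x * g) ` kspan b k"
    using assms(3) by (simp add: image_image mult.assoc)
  then show ?thesis
    using image_mult_K_ksubspace[OF ksubspace_kspan assms(1)] assms(2,3) by simp
qed

lemma divide_in_K_if_image_mult_kspan_eq:
  assumes "1 \<le> k" and "k < minpoly_degree q m b" and "g \<noteq> 0" and "h \<noteq> 0"
    and eq: "(\<lambda>x. x * g) ` kspan b k = (\<lambda>x. x * h) ` kspan b k"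
  shows "g / h \<in> K"
proof (rule kspan_stabilizer[OF assms(1,2)])
  fix x assume "x \<in> kspan b k"
  then have "x * g \<in> (\<lambda>x. x * h) ` kspan b k" using eq by blast
  then obtain y where "y \<in> kspan b k" "x * g = y * h" by blast
  moreover from this have "g / h * x = y" using assms(4) by (simp add: field_simps)
  ultimately show "g / h * x \<in> kspan b k" by simp
qed

lemma image_mult_kspan_minpoly_degree:
  assumes "b \<noteq> 0"
  shows "(\<lambda>x. x * b) ` kspan b (minpoly_degree q m b) = kspan b (minpoly_degree q m b)"
proof -
  have "(\<lambda>x. x * b) ` kspan b (minpoly_degree q m b) \<subseteq> kspan b (minpoly_degree q m b)"
    using kspan_times_base kspan_Suc_minpoly_degree by blast
  then show ?thesis using card_image_mult[OF assms] by (simp add: card_subset_eq)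
qed

lemma two_m_le_dist_image_mult_kspan:
  assumes "g \<noteq> 0" and "h \<noteq> 0" and "(\<lambda>x. x * g) ` kspan b k \<noteq> (\<lambda>x. x * h) ` kspan b k"
  shows "2 * m \<le> subspace_dist q ((\<lambda>x. x * g) ` kspan b k) ((\<lambda>x. x * h) ` kspan b k)"
  using assms
  by (intro two_m_le_subspace_dist ksubspace_image_mult ksubspace_kspan) (simp_all add: card_image_mult)

lemma dist_kspan_image_mult_base_le:
  assumes "1 \<le> k" and "k \<le> minpoly_degree q m b" and "b \<noteq> 0"
  shows "subspace_dist q (kspan b k) ((\<lambda>x. x * b) ` kspan b k) \<le> 2 * m"
proof (rule subspace_dist_le_two_m[OF ksubspace_kspan ksubspace_image_mult[OF ksubspace_kspan]
      ksubspace_kspan])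
  \<comment> \<open>\<open>b V\<^sub>k\<^sub>-\<^sub>1\<close> lies in both subspaces and both lie in \<open>V\<^sub>k\<^sub>+\<^sub>1\<close>\<close>
  show "(\<lambda>x. x * b) ` kspan b (k - 1) \<subseteq> kspan b k \<inter> (\<lambda>x. x * b) ` kspan b k"
    using kspan_times_base[of _ b "k - 1"] kspan_mono[of "k - 1" k b] assms(1) by auto
  show "card ((\<lambda>x. x * b) ` kspan b (k - 1)) = Q ^ (k - 1)"
    using card_image_mult[OF assms(3)] card_kspan assms(2) by simp
  show "kspan b k \<subseteq> kspan b (Suc k)" by (rule kspan_mono) simp
  show "(\<lambda>x. x * b) ` kspan b k \<subseteq> kspan b (Suc k)" using kspan_times_base by blast
  show "card (kspan b (Suc k)) \<le> Q ^ (k - 1 + 2)" using card_kspan_le[of b "Suc k"] assms(1) by simp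
qed

end

section \<open>The orbit code of a flag of spans\<close>

locale kspan_flag = finite_field_extension \<alpha> q n m
  for \<alpha> :: "'a::{finite,field}" and q n m +
  fixes \<beta> :: 'a and ss :: "nat list"
  assumes length_ss: "length ss \<ge> 2" and sorted_ss: "sorted_wrt (<) ss"
    and hd_ss: "1 \<le> hd ss" and last_ss: "last ss \<le> minpoly_degree q m \<beta>"
begin

abbreviation L :: nat where "L \<equiv> minpoly_degree q m \<beta>"

definition flag :: "'a \<Rightarrow> 'a set list" where
  "flag g = flag_mult (map (kspan \<beta>) ss) g"

definition code :: "'a set list set" where
  "code = orb \<alpha> (map (kspan \<beta>) ss)"

definition T :: nat where
  "T = N div (Q - 1)"

lemma ss_nonempty: "ss \<noteq> []"
  using length_ss by auto

lemma last_ss_eq_nth: "last ss = ss ! (length ss - 1)"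
  by (rule last_conv_nth[OF ss_nonempty])

lemma ss_nth_ge_1: "i < length ss \<Longrightarrow> 1 \<le> ss ! i"
  using hd_ss sorted_wrt_nth_less[OF sorted_ss, of 0 i] hd_conv_nth[OF ss_nonempty]
  by (cases i) auto

lemma ss_nth_lt_last: "i < length ss - 1 \<Longrightarrow> ss ! i < last ss"
  using sorted_wrt_nth_less[OF sorted_ss, of i "length ss - 1"] last_ss_eq_nth by simp

lemma ss_nth_le_last:
  assumes "i < length ss"
  shows "ss ! i \<le> last ss"
proof (cases "i < length ss - 1")
  case True
  then show ?thesis using ss_nth_lt_last by (simp add: less_imp_le)
next
  case False
  then have "i = length ss - 1" using assms by simp
  then show ?thesis using last_ss_eq_nth by simp
qed

lemma ss_nth_le_L: "i < length ss \<Longrightarrow> ss ! i \<le> L"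
  using ss_nth_le_last last_ss by (meson le_trans)

lemma first_ss: "0 < length ss" "1 \<le> ss ! 0" "ss ! 0 < L"
  using length_ss ss_nonempty ss_nth_ge_1[of 0] ss_nth_lt_last[of 0] last_ss by auto

lemma L_ge_2: "L \<ge> 2"
  using first_ss by simp

lemma beta_notin_K: "\<beta> \<notin> K"
proof
  assume "\<beta> \<in> K"
  define e where "e j = (if j = 0 then - \<beta> else 1)" for j :: nat
  have "(\<Sum>j<2. e j * \<beta> ^ j) = 0" unfolding e_def by (simp add: numeral_2_eq_2)
  moreover have "\<forall>j<2. e j \<in> K" using \<open>\<beta> \<in> K\<close> unfolding e_def by (auto intro: K_uminus)
  ultimately have "e 1 = 0" using powers_independent[OF L_ge_2, of e 1] by simp
  then show False unfolding e_def by simp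
qed

lemma beta_nonzero: "\<beta> \<noteq> 0"
  using beta_notin_K K_zero by metis

lemma length_flag: "length (flag g) = length ss"
  unfolding flag_def flag_mult_def by simp

lemma flag_nth: "i < length ss \<Longrightarrow> flag g ! i = (\<lambda>x. x * g) ` kspan \<beta> (ss ! i)"
  unfolding flag_def flag_mult_def by simp

lemma flag_mult_flag: "flag_mult (flag g) h = flag (g * h)"
  unfolding flag_def flag_mult_def by (simp add: image_image mult.assoc)

lemma code_eq: "code = range (\<lambda>j. flag (\<alpha> ^ j))"
  unfolding code_def orb_def flag_def by auto

lemma flag_eq_iff:
  assumes "g \<noteq> 0" and "h \<noteq> 0"
  shows "flag g = flag h \<longleftrightarrow> g / h \<in> K"
proof
  assume "flag g = flag h"
  then have "(\<lambda>x. x * g) ` kspan \<beta> (ss ! 0) = (\<lambda>x. x * h) ` kspan \<beta> (ss ! 0)"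
    using flag_nth[OF first_ss(1)] by metis
  then show "g / h \<in> K"
    by (rule divide_in_K_if_image_mult_kspan_eq[OF first_ss(2,3) assms])
next
  assume "g / h \<in> K"
  then show "flag g = flag h"
    using image_mult_kspan_eq[OF _ assms] by (intro nth_equalityI) (simp_all add: length_flag flag_nth)
qed

lemma flag_nth_neq:
  assumes "g \<noteq> 0" and "h \<noteq> 0" and "flag g \<noteq> flag h" and "i < length ss" and "ss ! i < L"
  shows "flag g ! i \<noteq> flag h ! i"
  using divide_in_K_if_image_mult_kspan_eq[OF ss_nth_ge_1[OF assms(4)] assms(5,1,2)]
    flag_eq_iff[OF assms(1,2)] assms(3,4) flag_nth
  by auto

lemma Q_minus_1_dvd_N: "Q - 1 dvd N"
  using power_minus_one_dvd[of Q] m_dvd_n unfolding Q_def N_def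
  by (auto simp flip: power_mult)

lemma T_pos: "T > 0"
  using Q_minus_1_dvd_N N_pos Q_gt_1 unfolding T_def by (auto elim!: dvdE)

lemma T_dvd_N: "T dvd N"
  using Q_minus_1_dvd_N unfolding T_def by (metis dvd_div_mult_self dvd_triv_left)

lemma K_minus_zero: "K - {0} = {\<alpha> ^ j | j. T dvd j}"
  unfolding K_def T_def Q_def by (rule subfield_minus_zero[OF m_dvd_n])

lemma flag_alpha_power_eq_iff: "flag (\<alpha> ^ i) = flag (\<alpha> ^ j) \<longleftrightarrow> i mod T = j mod T"
proof
  assume "flag (\<alpha> ^ i) = flag (\<alpha> ^ j)"
  then have "\<alpha> ^ i / \<alpha> ^ j \<in> K - {0}" using flag_eq_iff alpha_nonzero by simp
  then obtain e where "\<alpha> ^ i / \<alpha> ^ j = \<alpha> ^ e" "T dvd e" unfolding K_minus_zero by blast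
  then have "\<alpha> ^ i = \<alpha> ^ j * \<alpha> ^ e" using alpha_nonzero by (simp add: divide_eq_eq mult.commute)
  then show "i mod T = j mod T" by (rule alpha_power_mult_eq_mod[OF T_dvd_N _ \<open>T dvd e\<close>])
next
  assume mod_eq: "i mod T = j mod T"
  have mult_T_in_K: "\<alpha> ^ (T * k) \<in> K" for k
  proof -
    have "\<alpha> ^ (T * k) \<in> K - {0}" unfolding K_minus_zero using dvd_triv_left[of T k] by blast
    then show ?thesis by blast
  qed
  have i: "\<alpha> ^ i = \<alpha> ^ (T * (i div T)) * \<alpha> ^ (i mod T)"
    and j: "\<alpha> ^ j = \<alpha> ^ (T * (j div T)) * \<alpha> ^ (j mod T)"
    by (subst power_div_mod[of \<alpha> _ T], simp add: power_mult)+
  have "\<alpha> ^ i / \<alpha> ^ j = \<alpha> ^ (T * (i div T)) / \<alpha> ^ (T * (j div T))"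
    unfolding i j mod_eq using alpha_nonzero by (simp add: nonzero_mult_divide_mult_cancel_right)
  then have "\<alpha> ^ i / \<alpha> ^ j \<in> K" using K_divide mult_T_in_K by simp
  then show "flag (\<alpha> ^ i) = flag (\<alpha> ^ j)" using flag_eq_iff alpha_nonzero by simp
qed

lemma code_eq_image: "code = (\<lambda>j. flag (\<alpha> ^ j)) ` {..<T}"
proof -
  have "flag (\<alpha> ^ j) \<in> (\<lambda>j. flag (\<alpha> ^ j)) ` {..<T}" for j
    using flag_alpha_power_eq_iff[of j "j mod T"] T_pos by (auto intro!: image_eqI[of _ _ "j mod T"])
  then show ?thesis unfolding code_eq by auto
qed

lemma card_code: "card code = T"
proof -
  have "inj_on (\<lambda>j. flag (\<alpha> ^ j)) {..<T}"
    by (rule inj_onI) (simp add: flag_alpha_power_eq_iff)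
  then show ?thesis unfolding code_eq_image by (simp add: card_image)
qed

lemma finite_code: "finite code"
  unfolding code_eq_image by simp

lemma code_elem:
  assumes "F \<in> code"
  obtains g where "g \<noteq> 0" and "F = flag g"
proof -
  obtain j where "F = flag (\<alpha> ^ j)" using assms unfolding code_eq by blast
  then show ?thesis using that[of "\<alpha> ^ j"] alpha_nonzero by simp
qed

lemma flag_one_in_code: "flag 1 \<in> code"
  unfolding code_eq by (auto intro: image_eqI[of _ _ 0])

lemma flag_alpha_power_in_code: "flag (\<alpha> ^ j) \<in> code"
  unfolding code_eq by simp

lemma flag_one_neq_flag_beta: "flag 1 \<noteq> flag \<beta>"
  using flag_eq_iff[of 1 \<beta>] beta_nonzero beta_notin_K K_inverse[of "1 / \<beta>"] by auto

lemma flag_beta_in_code: "flag \<beta> \<in> code"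
proof -
  obtain j where "\<beta> = \<alpha> ^ j" using ex_alpha_power beta_nonzero by blast
  then show ?thesis using flag_alpha_power_in_code by simp
qed

lemma is_best_friend: "is_best_friend q n m (map (kspan \<beta>) ss)"
  unfolding is_best_friend_def flag_friend_def
proof (intro conjI allI impI ballI)
  fix U and c u :: 'a assume "U \<in> set (map (kspan \<beta>) ss)" "c \<in> subfield q m" "u \<in> U"
  then show "c * u \<in> U" using ksubspace_smult[OF ksubspace_kspan] unfolding K_def by auto
next
  fix d assume d: "d dvd n \<and> (\<forall>U\<in>set (map (kspan \<beta>) ss). \<forall>c\<in>subfield q d. \<forall>u\<in>U. c * u \<in> U)"
  \<comment> \<open>a friend stabilizes the first subspace, whose stabilizer is \<open>K\<close>\<close>
  have "subfield q d \<subseteq> K"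
  proof
    fix c :: 'a assume "c \<in> subfield q d"
    moreover have "kspan \<beta> (ss ! 0) \<in> set (map (kspan \<beta>) ss)" using first_ss(1) by simp
    ultimately show "c \<in> K"
      using d by (intro kspan_stabilizer[OF first_ss(2,3)]) auto
  qed
  then have "q ^ d \<le> q ^ m"
    using card_mono[of K "subfield q d"] card_subfield d card_K unfolding Q_def by simp
  then show "d \<le> m" using q_ge_2 by (simp add: power_le_imp_le_exp)
qed (rule m_dvd_n)

lemma orbit_alpha_power_flag: "orb (\<alpha> ^ c) (flag (\<alpha> ^ i)) = {flag (\<alpha> ^ (i + c * j)) | j. True}"
  unfolding orb_def flag_mult_flag by (simp add: power_add power_mult)

lemma code_eq_Union_orbits:
  assumes "c > 0"
  shows "code = (\<Union>i<c. orb (\<alpha> ^ c) (flag (\<alpha> ^ i)))"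
proof
  show "code \<subseteq> (\<Union>i<c. orb (\<alpha> ^ c) (flag (\<alpha> ^ i)))"
  proof
    fix F assume "F \<in> code"
    then obtain j where "F = flag (\<alpha> ^ (j mod c + c * (j div c)))" unfolding code_eq by auto
    then have "F \<in> orb (\<alpha> ^ c) (flag (\<alpha> ^ (j mod c)))" unfolding orbit_alpha_power_flag by blast
    moreover have "j mod c < c" using assms(1) by simp
    ultimately show "F \<in> (\<Union>i<c. orb (\<alpha> ^ c) (flag (\<alpha> ^ i)))" by blast
  qed
qed (auto simp: orbit_alpha_power_flag code_eq)

lemma orbits_disjoint:
  assumes "c dvd T" and "i < c" and "j < c" and "i \<noteq> j"
  shows "orb (\<alpha> ^ c) (flag (\<alpha> ^ i)) \<inter> orb (\<alpha> ^ c) (flag (\<alpha> ^ j)) = {}"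
proof (rule ccontr)
  assume "orb (\<alpha> ^ c) (flag (\<alpha> ^ i)) \<inter> orb (\<alpha> ^ c) (flag (\<alpha> ^ j)) \<noteq> {}"
  then obtain a b where "flag (\<alpha> ^ (i + c * a)) = flag (\<alpha> ^ (j + c * b))"
    unfolding orbit_alpha_power_flag by blast
  then have "(i + c * a) mod T mod c = (j + c * b) mod T mod c"
    unfolding flag_alpha_power_eq_iff by simp
  then have "i mod c = j mod c" using assms(1) by (simp add: mod_mod_cancel)
  then show False using assms(2-4) by simp
qed

lemma minpoly_cofactor_dvd_T: "N div (Q ^ L - 1) dvd T" and minpoly_cofactor_pos: "N div (Q ^ L - 1) > 0"
proof -
  obtain c where c: "N = (Q ^ L - 1) * c" using card_kspan_minpoly_degree_dvd by blast
  obtain k where k: "Q ^ L - 1 = (Q - 1) * k" using power_minus_one_dvd[of Q L] by blast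
  have "Q ^ L > 1" by (rule one_less_power[OF Q_gt_1 minpoly_degree_pos])
  then have "Q ^ L - 1 > 0" by simp
  then have "N div (Q ^ L - 1) = c" using c by simp
  moreover have "T = c * k" using c k Q_gt_1 unfolding T_def by simp
  ultimately show "N div (Q ^ L - 1) dvd T" by simp
  show "N div (Q ^ L - 1) > 0" using c N_pos \<open>N div (Q ^ L - 1) = c\<close> by auto
qed

lemma flag_dist_ge:
  assumes "F \<in> code" and "G \<in> code" and "F \<noteq> G"
  shows "2 * m * card {i. i < length ss \<and> ss ! i < L} \<le> flag_dist q F G"
proof -
  obtain g where g: "g \<noteq> 0" "F = flag g" by (rule code_elem[OF assms(1)])
  obtain h where h: "h \<noteq> 0" "G = flag h" by (rule code_elem[OF assms(2)])
  have "2 * m * card {i. i < length ss \<and> ss ! i < L} = (\<Sum>i<length ss. if ss ! i < L then 2 * m else 0)"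
    by (simp add: sum_if_eq_card)
  also have "\<dots> \<le> (\<Sum>i<length ss. subspace_dist q (flag g ! i) (flag h ! i))"
    using g h assms(3) flag_nth_neq[OF g(1) h(1)] flag_nth
    by (intro sum_mono) (auto intro!: two_m_le_dist_image_mult_kspan)
  also have "\<dots> = flag_dist q F G" unfolding flag_dist_def g h length_flag ..
  finally show ?thesis .
qed

lemma flag_dist_one_beta_le: "flag_dist q (flag 1) (flag \<beta>) \<le> 2 * m * card {i. i < length ss \<and> ss ! i < L}"
proof -
  have "subspace_dist q (flag 1 ! i) (flag \<beta> ! i) \<le> (if ss ! i < L then 2 * m else 0)"
    if i: "i < length ss" for i
  proof (cases "ss ! i < L")
    case True
    then show ?thesis
      using dist_kspan_image_mult_base_le[OF ss_nth_ge_1[OF i] _ beta_nonzero] flag_nth i by simp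
  next
    \<comment> \<open>the span of all powers is a field, so multiplication by \<open>\<beta>\<close> fixes it\<close>
    case False
    then have "ss ! i = L" using ss_nth_le_L[OF i] by simp
    then show ?thesis
      using flag_nth i image_mult_kspan_minpoly_degree[OF beta_nonzero]
        ssum_self[OF ksubspace_kspan] by (simp add: subspace_dist_def)
  qed
  then have "flag_dist q (flag 1) (flag \<beta>) \<le> (\<Sum>i<length ss. if ss ! i < L then 2 * m else 0)"
    unfolding flag_dist_def length_flag by (intro sum_mono) simp
  then show ?thesis by (simp add: sum_if_eq_card)
qed

lemma flag_min_dist_code: "flag_min_dist q code = 2 * m * card {i. i < length ss \<and> ss ! i < L}"
  unfolding flag_min_dist_def
proof (rule Min_eqI)
  show "finite {flag_dist q F G | F G. F \<in> code \<and> G \<in> code \<and> F \<noteq> G}"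
    by (rule finite_image_pairs[OF finite_code])
  show "2 * m * card {i. i < length ss \<and> ss ! i < L} \<le> d"
    if "d \<in> {flag_dist q F G | F G. F \<in> code \<and> G \<in> code \<and> F \<noteq> G}" for d
    using that flag_dist_ge by blast
  have "flag_dist q (flag 1) (flag \<beta>) = 2 * m * card {i. i < length ss \<and> ss ! i < L}"
    using flag_dist_one_beta_le flag_dist_ge[OF flag_one_in_code flag_beta_in_code flag_one_neq_flag_beta]
    by simp
  then show "2 * m * card {i. i < length ss \<and> ss ! i < L}
      \<in> {flag_dist q F G | F G. F \<in> code \<and> G \<in> code \<and> F \<noteq> G}"
    using flag_one_in_code flag_beta_in_code flag_one_neq_flag_beta by force
qed

lemma inj_on_projection:
  assumes "i < length ss" and "ss ! i < L"
  shows "inj_on (\<lambda>F. F ! i) code"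
proof (rule inj_onI)
  fix F G assume "F \<in> code" "G \<in> code" and eq: "F ! i = G ! i"
  obtain g where g: "g \<noteq> 0" "F = flag g" by (rule code_elem[OF \<open>F \<in> code\<close>])
  obtain h where h: "h \<noteq> 0" "G = flag h" by (rule code_elem[OF \<open>G \<in> code\<close>])
  show "F = G" using flag_nth_neq[OF g(1) h(1) _ assms] eq g(2) h(2) by blast
qed

lemma card_projected:
  assumes "i < length ss" and "ss ! i < L"
  shows "card (projected code i) = card code"
proof -
  have "projected code i = (\<lambda>F. F ! i) ` code" unfolding projected_def by blast
  then show ?thesis using inj_on_projection[OF assms] by (simp add: card_image)
qed

lemma subspace_min_dist_projected:
  assumes i: "i < length ss" and "ss ! i < L"
  shows "subspace_min_dist q (projected code i) = 2 * m"
  unfolding subspace_min_dist_def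
proof (rule Min_eqI)
  have P: "projected code i = (\<lambda>F. F ! i) ` code" unfolding projected_def by blast
  show "finite {subspace_dist q U V | U V. U \<in> projected code i \<and> V \<in> projected code i \<and> U \<noteq> V}"
    unfolding P using finite_code by (intro finite_image_pairs) simp
  show "2 * m \<le> d"
    if d_mem: "d \<in> {subspace_dist q U V | U V. U \<in> projected code i \<and> V \<in> projected code i \<and> U \<noteq> V}"
    for d
  proof -
    obtain F G where "F \<in> code" "G \<in> code" and "F ! i \<noteq> G ! i"
      and d: "d = subspace_dist q (F ! i) (G ! i)"
      using d_mem unfolding P by blast
    obtain g where g: "g \<noteq> 0" "F = flag g" by (rule code_elem[OF \<open>F \<in> code\<close>])
    obtain h where h: "h \<noteq> 0" "G = flag h" by (rule code_elem[OF \<open>G \<in> code\<close>])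
    show ?thesis
      using two_m_le_dist_image_mult_kspan[OF g(1) h(1)] \<open>F ! i \<noteq> G ! i\<close>
      unfolding d g(2) h(2) flag_nth[OF i] by blast
  qed
  have "flag 1 ! i \<noteq> flag \<beta> ! i"
    using flag_nth_neq[OF _ beta_nonzero flag_one_neq_flag_beta assms] by simp
  moreover have "subspace_dist q (flag 1 ! i) (flag \<beta> ! i) = 2 * m"
  proof (rule antisym)
    show "subspace_dist q (flag 1 ! i) (flag \<beta> ! i) \<le> 2 * m"
      using dist_kspan_image_mult_base_le[OF ss_nth_ge_1[OF i] ss_nth_le_L[OF i] beta_nonzero]
      by (simp add: flag_nth[OF i])
    show "2 * m \<le> subspace_dist q (flag 1 ! i) (flag \<beta> ! i)"
      using two_m_le_dist_image_mult_kspan[OF one_neq_zero beta_nonzero] calculation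
      unfolding flag_nth[OF i] by blast
  qed
  ultimately show "2 * m \<in> {subspace_dist q U V | U V. U \<in> projected code i \<and> V \<in> projected code i \<and> U \<noteq> V}"
    unfolding P using flag_one_in_code flag_beta_in_code by force
qed

lemma consistent_code_if_last_lt:
  assumes "last ss < L"
  shows "consistent_code q (length ss) code \<and> flag_min_dist q code = 2 * m * length ss"
proof -
  have all: "ss ! i < L" if "i < length ss" for i using that ss_nth_le_last assms by (meson le_less_trans)
  then have "{i. i < length ss \<and> ss ! i < L} = {..<length ss}" by auto
  then have "flag_min_dist q code = 2 * m * length ss" using flag_min_dist_code by simp
  moreover have "disjoint_code (length ss) code"
    unfolding disjoint_code_def using card_projected all by blast
  moreover have "(\<Sum>i<length ss. subspace_min_dist q (projected code i)) = 2 * m * length ss"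
    using subspace_min_dist_projected all by simp
  ultimately show ?thesis unfolding consistent_code_def by simp
qed

lemma flag_min_dist_if_last_eq:
  assumes "last ss = L"
  shows "flag_min_dist q code = 2 * m * (length ss - 1)"
proof -
  have "i < length ss \<and> ss ! i < L \<longleftrightarrow> i < length ss - 1" for i
    using ss_nth_lt_last[of i] assms last_ss_eq_nth by (cases "i = length ss - 1") auto
  then have "{i. i < length ss \<and> ss ! i < L} = {..<length ss - 1}" by auto
  then show ?thesis using flag_min_dist_code by simp
qed

end

theorem mainTheorem5:
  fixes \<alpha> :: "'a::{finite,field}"
    and q n m l r :: nat and ss :: "nat list"
  assumes "prime_power q" and "n \<ge> 1" and "card (UNIV :: 'a set) = q ^ n"
    and "m dvd n"
    and "primitive_elem \<alpha>"
    and "1 \<le> l" and "l < (q ^ n - 1) div (q ^ m - 1)"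
    and "r \<ge> 2" and "length ss = r" and "sorted_wrt (<) ss"
    and "1 \<le> hd ss"
    and "last ss \<le> minpoly_degree q m (\<alpha> ^ l)"
    and "last ss < n div m"
  shows "let s = n div m; L = minpoly_degree q m (\<alpha> ^ l);
             F = map (\<lambda>si. fspan q m si (\<lambda>j. \<alpha> ^ (l * j))) ss;
             C = orb \<alpha> F
         in is_best_friend q n m F
          \<and> card C = (q ^ n - 1) div (q ^ m - 1)
          \<and> (last ss < L \<longrightarrow> consistent_code q r C \<and> flag_min_dist q C = 2 * m * r)
          \<and> (last ss = L \<longrightarrow>
               (let c = (q ^ n - 1) div (q ^ (m * L) - 1) in
                  flag_min_dist q C = 2 * m * (r - 1)
                \<and> C = (\<Union>i<c. orb (\<alpha> ^ c) (flag_mult F (\<alpha> ^ i)))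
                \<and> (\<forall>i<c. \<forall>j<c. i \<noteq> j \<longrightarrow>
                      orb (\<alpha> ^ c) (flag_mult F (\<alpha> ^ i)) \<inter> orb (\<alpha> ^ c) (flag_mult F (\<alpha> ^ j)) = {})))"
proof -
  have q: "q \<ge> 2" using prime_power_ge_2[OF assms(1)] .
  have "hd ss < last ss" using assms(8-10) by (intro hd_less_last_if_sorted) auto
  then have "2 \<le> n" using assms(11,13) div_le_dividend[of n m] by linarith
  then have "q ^ 2 \<le> q ^ n" using q by (intro power_increasing) auto
  moreover have "4 \<le> q ^ 2" using power_mono[OF q, of 2] by simp
  ultimately have "\<alpha> \<noteq> 0" using assms(3) by (intro primitive_elem_nonzero[OF assms(5)]) linarith
  interpret kspan_flag \<alpha> q n m "\<alpha> ^ l" ss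
    using assms \<open>\<alpha> \<noteq> 0\<close> by unfold_locales auto
  have F: "map (\<lambda>si. fspan q m si (\<lambda>j. \<alpha> ^ (l * j))) ss = map (kspan (\<alpha> ^ l)) ss"
    unfolding kspan_def by (simp add: power_mult)
  have c: "(q ^ n - 1) div (q ^ (m * L) - 1) = N div (Q ^ L - 1)"
    unfolding N_def Q_def by (simp add: power_mult)
  have card: "(q ^ n - 1) div (q ^ m - 1) = T"
    unfolding T_def N_def Q_def ..
  show ?thesis
    unfolding Let_def F c card assms(9)[symmetric] code_def[symmetric] flag_def[symmetric]
    using is_best_friend card_code consistent_code_if_last_lt flag_min_dist_if_last_eq
      code_eq_Union_orbits[OF minpoly_cofactor_pos]
      orbits_disjoint[OF minpoly_cofactor_dvd_T]
    by blast
qed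

end
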